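(* Let $x$ be an element of a commutative ring $R$ and $U$ a variable. The maps $f_0:R[U^{-1}]\to R$, $\sum_{i=0}^nr_iU^{-i}\mapsto r_0$, and $f_1:R[U^{-1}]\to R_x$, $f(U^{-1})\mapsto f(x^{-1})/x$, define a morphism of complexes from $K^\bullet(x-U;R[U^{-1}]):0\to R[U^{-1}]\xrightarrow{x-U}R[U^{-1}]\to0$ to $\check{C}_x:0\to R\xrightarrow{\iota_x}R_x\to0$, and this morphism is a quasi-isomorphism.
   Context: $R[U^{-1}]$ is the module of inverse polynomials: the free $R$-module with basis $U^{-i}$, $i\ge0$, which is an $R[U]$-module via $U^j\cdot U^{-i}=U^{j-i}$ if $j\le i$ and $=0$ if $j>i$. Both complexes are in cohomological degrees $0,1$; $\iota_x(r)=r/1$. *)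

theory Defs
  imports Main
begin

text \<open>An element sum r_i U^(-i) is represented by its coefficient function
  g :: nat => 'a, g i = r_i, with finite support.\<close>

definition inv_polys :: "(nat \<Rightarrow> 'a::zero) set" where
  "inv_polys = {g. finite {i. g i \<noteq> 0}}"

text \<open>Action of U: U * U^(-i) = U^(-(i-1)) for i >= 1 and U * U^0 = 0,
  so the coefficient of U^(-i) in U*g is the coefficient of U^(-(i+1)) in g.\<close>

definition U_act :: "(nat \<Rightarrow> 'a) \<Rightarrow> nat \<Rightarrow> 'a" where
  "U_act g = (\<lambda>i. g (Suc i))"

definition xU_mult :: "'a::comm_ring_1 \<Rightarrow> (nat \<Rightarrow> 'a) \<Rightarrow> nat \<Rightarrow> 'a" where
  "xU_mult x g = (\<lambda>i. x * g i - U_act g i)"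

text \<open>R_x = (R x nat)/~ where (a,m) represents a/x^m and
  (a,m) ~ (b,n) iff x^k (x^n a - x^m b) = 0 for some k.\<close>

definition locrel :: "'a::comm_ring_1 \<Rightarrow> (('a \<times> nat) \<times> ('a \<times> nat)) set" where
  "locrel x = {((a,m),(b,n)). \<exists>k. x ^ k * (x ^ n * a - x ^ m * b) = 0}"

definition loc_elem :: "'a::comm_ring_1 \<Rightarrow> 'a \<Rightarrow> nat \<Rightarrow> ('a \<times> nat) set" where
  "loc_elem x a m = locrel x `` {(a, m)}"

definition Loc :: "'a::comm_ring_1 \<Rightarrow> ('a \<times> nat) set set" where
  "Loc x = (UNIV :: ('a \<times> nat) set) // locrel x"

definition loc_add :: "'a::comm_ring_1 \<Rightarrow> ('a \<times> nat) set \<Rightarrow> ('a \<times> nat) set \<Rightarrow> ('a \<times> nat) set" where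
  "loc_add x A B = (\<Union>(a,m)\<in>A. \<Union>(b,n)\<in>B. loc_elem x (x ^ n * a + x ^ m * b) (m + n))"

definition loc_smul :: "'a::comm_ring_1 \<Rightarrow> 'a \<Rightarrow> ('a \<times> nat) set \<Rightarrow> ('a \<times> nat) set" where
  "loc_smul x r A = (\<Union>(a,m)\<in>A. loc_elem x (r * a) m)"

definition loc_iota :: "'a::comm_ring_1 \<Rightarrow> 'a \<Rightarrow> ('a \<times> nat) set" where
  "loc_iota x r = loc_elem x r 0"

definition inv_deg :: "(nat \<Rightarrow> 'a::zero) \<Rightarrow> nat" where
  "inv_deg g = (LEAST n. \<forall>i\<ge>n. g i = 0)"

definition f0_map :: "(nat \<Rightarrow> 'a) \<Rightarrow> 'a" where
  "f0_map g = g 0"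

text \<open>f1(g) = g(x^-1)/x = sum_{i<n} g_i x^(-(i+1)) = (sum_{i<n} g_i x^(n-(i+1))) / x^n.\<close>

definition f1_map :: "'a::comm_ring_1 \<Rightarrow> (nat \<Rightarrow> 'a) \<Rightarrow> ('a \<times> nat) set" where
  "f1_map x g = (let n = inv_deg g in loc_elem x (\<Sum>i<n. g i * x ^ (n - Suc i)) n)"

end

theory Submission
  imports Defs
begin

text \<open>For g supported below N put H_N(g) = sum_{i<N} g_i x^(N-1-i), so that f_1(g) = H_N(g)/x^N
  for every such N, and H_{N+1} = x H_N + g_N. Telescoping gives H_N((x - U)g) = g_0 x^N - g_N,
  which is commutativity of the square. The kernel of x - U consists of the sequences r x^i,
  finitely supported iff x^k r = 0 for some k, i.e. iff r/1 = 0. In degree 1, a/x^m is f_1 of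
  a U^(-(m-1)) (or a/1 itself when m = 0); and if f_1(g) = r/1 then h_i = x^i r - H_i(g) satisfies
  (x - U)h = g by the recursion for H, and h is finitely supported because
  x^k (H_N(g) - x^N r) = 0.\<close>

lemma locrel_iff: "((a, m), (b, n)) \<in> locrel x \<longleftrightarrow> (\<exists>k. x ^ k * (x ^ n * a - x ^ m * b) = 0)"
  by (simp add: locrel_def)

lemma equiv_locrel: "equiv UNIV (locrel x)"
proof -
  have "refl_on UNIV (locrel x)"
    by (auto simp: refl_on_def locrel_def intro!: exI[of _ 0])
  moreover have "sym (locrel x)"
  proof (rule symI)
    fix p q assume "(p, q) \<in> locrel x"
    then obtain a m b n k where pq: "p = (a, m)" "q = (b, n)" "x ^ k * (x ^ n * a - x ^ m * b) = 0"
      by (cases p, cases q) (auto simp: locrel_def)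
    have "x ^ k * (x ^ m * b - x ^ n * a) = - (x ^ k * (x ^ n * a - x ^ m * b))"
      by (simp add: algebra_simps)
    with pq show "(q, p) \<in> locrel x" by (auto simp: locrel_def)
  qed
  moreover have "trans (locrel x)"
  proof (rule transI)
    fix p q s assume "(p, q) \<in> locrel x" "(q, s) \<in> locrel x"
    then obtain a m b n c l k j where pqs: "p = (a, m)" "q = (b, n)" "s = (c, l)"
      "x ^ k * (x ^ n * a - x ^ m * b) = 0" "x ^ j * (x ^ l * b - x ^ n * c) = 0"
      by (cases p, cases q, cases s) (auto simp: locrel_def)
    have "x ^ (k + j + n) * (x ^ l * a - x ^ m * c)
        = x ^ (j + l) * (x ^ k * (x ^ n * a - x ^ m * b)) + x ^ (k + m) * (x ^ j * (x ^ l * b - x ^ n * c))"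
      by (simp add: algebra_simps power_add)
    with pqs show "(p, s) \<in> locrel x" by (auto simp: locrel_def)
  qed
  ultimately show ?thesis by (simp add: equiv_def)
qed

lemma loc_elem_eq_iff: "loc_elem x a m = loc_elem x b n \<longleftrightarrow> ((a, m), (b, n)) \<in> locrel x"
  unfolding loc_elem_def using eq_equiv_class_iff[OF equiv_locrel] by blast

lemma loc_elem_eqI: "x ^ n * a = x ^ m * b \<Longrightarrow> loc_elem x a m = loc_elem x b n"
  by (auto simp: loc_elem_eq_iff locrel_def intro!: exI[of _ 0])

lemma loc_elem_in_Loc: "loc_elem x a m \<in> Loc x"
  unfolding loc_elem_def Loc_def by (rule quotientI) simp

lemma LocE:
  assumes "y \<in> Loc x"
  obtains a m where "y = loc_elem x a m"
  using assms unfolding Loc_def loc_elem_def by (auto elim!: quotientE)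

lemma mem_loc_elem_iff: "(b, n) \<in> loc_elem x a m \<longleftrightarrow> ((a, m), (b, n)) \<in> locrel x"
  by (simp add: loc_elem_def)

lemma loc_elem_self: "(a, m) \<in> loc_elem x a m"
  by (simp add: mem_loc_elem_iff locrel_def exI[of _ 0])

lemma loc_add_loc_elem:
  "loc_add x (loc_elem x a m) (loc_elem x b n) = loc_elem x (x ^ n * a + x ^ m * b) (m + n)"
proof -
  have representative_independent:
    "loc_elem x (x ^ n' * a' + x ^ m' * b') (m' + n') = loc_elem x (x ^ n * a + x ^ m * b) (m + n)"
    if a': "(a', m') \<in> loc_elem x a m" and b': "(b', n') \<in> loc_elem x b n" for a' m' b' n'
  proof -
    obtain k where k: "x ^ k * (x ^ m' * a - x ^ m * a') = 0"
      using a' by (auto simp: mem_loc_elem_iff locrel_iff)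
    obtain l where l: "x ^ l * (x ^ n' * b - x ^ n * b') = 0"
      using b' by (auto simp: mem_loc_elem_iff locrel_iff)
    have "x ^ (k + l) * (x ^ (m + n) * (x ^ n' * a' + x ^ m' * b') - x ^ (m' + n') * (x ^ n * a + x ^ m * b))
        = - (x ^ l * x ^ (n + n')) * (x ^ k * (x ^ m' * a - x ^ m * a'))
          - (x ^ k * x ^ (m + m')) * (x ^ l * (x ^ n' * b - x ^ n * b'))"
      by (simp add: algebra_simps power_add)
    with k l show ?thesis by (auto simp: loc_elem_eq_iff locrel_def)
  qed
  show ?thesis
    unfolding loc_add_def
    using representative_independent loc_elem_self[of a m x] loc_elem_self[of b n x] by blast
qed

lemma loc_smul_loc_elem: "loc_smul x r (loc_elem x a m) = loc_elem x (r * a) m"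
proof -
  have representative_independent: "loc_elem x (r * a') m' = loc_elem x (r * a) m"
    if a': "(a', m') \<in> loc_elem x a m" for a' m'
  proof -
    obtain k where k: "x ^ k * (x ^ m' * a - x ^ m * a') = 0"
      using a' by (auto simp: mem_loc_elem_iff locrel_iff)
    have "x ^ k * (x ^ m * (r * a') - x ^ m' * (r * a)) = - r * (x ^ k * (x ^ m' * a - x ^ m * a'))"
      by (simp add: algebra_simps)
    with k show ?thesis by (auto simp: loc_elem_eq_iff locrel_def)
  qed
  show ?thesis
    unfolding loc_smul_def using representative_independent loc_elem_self[of a m x] by blast
qed

lemma loc_iota_eq_zero_iff: "loc_iota x r = loc_iota x 0 \<longleftrightarrow> (\<exists>k. x ^ k * r = 0)"
  by (simp add: loc_iota_def loc_elem_eq_iff locrel_iff)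

lemma inv_polysE:
  assumes "g \<in> inv_polys"
  obtains N where "\<forall>i\<ge>N. g i = 0"
proof -
  have "finite {i. g i \<noteq> 0}" using assms by (simp add: inv_polys_def)
  then obtain N where "\<forall>i\<in>{i. g i \<noteq> 0}. i < N" using finite_nat_set_iff_bounded by blast
  then show ?thesis using that by (meson mem_Collect_eq not_le)
qed

lemma inv_polysI: "\<forall>i\<ge>N. g i = 0 \<Longrightarrow> g \<in> inv_polys"
  unfolding inv_polys_def mem_Collect_eq
  by (rule finite_subset[of _ "{..<N}"]) (auto simp: not_less[symmetric])

lemma inv_deg_vanishing:
  assumes "g \<in> inv_polys"
  shows "\<forall>i\<ge>inv_deg g. g i = 0"
proof -
  obtain N where "\<forall>i\<ge>N. g i = 0" using assms by (rule inv_polysE)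
  then show ?thesis unfolding inv_deg_def by (rule LeastI)
qed

lemma inv_deg_le: "\<forall>i\<ge>N. g i = 0 \<Longrightarrow> inv_deg g \<le> N"
  unfolding inv_deg_def by (rule Least_le)

definition horner_sum :: "'a::comm_ring_1 \<Rightarrow> (nat \<Rightarrow> 'a) \<Rightarrow> nat \<Rightarrow> 'a" where
  "horner_sum x g N = (\<Sum>i<N. g i * x ^ (N - Suc i))"

lemma horner_sum_0 [simp]: "horner_sum x g 0 = 0"
  by (simp add: horner_sum_def)

lemma horner_sum_Suc: "horner_sum x g (Suc N) = x * horner_sum x g N + g N"
proof -
  have "(\<Sum>i<N. g i * x ^ (N - i)) = x * horner_sum x g N"
    unfolding horner_sum_def sum_distrib_left
  proof (rule sum.cong)
    fix i assume "i \<in> {..<N}"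
    then have "N - i = Suc (N - Suc i)" by auto
    then show "g i * x ^ (N - i) = x * (g i * x ^ (N - Suc i))" by (simp add: algebra_simps)
  qed simp
  then show ?thesis by (simp add: horner_sum_def)
qed

lemma horner_sum_beyond_support:
  assumes "\<forall>i\<ge>N. g i = 0"
  shows "horner_sum x g (N + d) = x ^ d * horner_sum x g N"
  by (induction d) (use assms in \<open>simp_all add: horner_sum_Suc\<close>)

lemma horner_sum_linear:
  "horner_sum x (\<lambda>i. r * g i + s * h i) N = r * horner_sum x g N + s * horner_sum x h N"
  by (simp add: horner_sum_def sum.distrib sum_distrib_left algebra_simps)

lemma horner_sum_xU_mult: "horner_sum x (xU_mult x g) N = g 0 * x ^ N - g N"
  by (induction N)
     (simp_all add: horner_sum_Suc xU_mult_def U_act_def right_diff_distrib mult.assoc mult.left_commute)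

lemma f1_map_eq_horner_sum:
  assumes "\<forall>i\<ge>N. g i = 0"
  shows "f1_map x g = loc_elem x (horner_sum x g N) N"
proof -
  define n where "n = inv_deg g"
  have "\<forall>i\<ge>n. g i = 0" unfolding n_def using inv_deg_vanishing[OF inv_polysI[OF assms]] .
  moreover obtain d where d: "N = n + d"
    using inv_deg_le[OF assms] le_Suc_ex unfolding n_def by blast
  ultimately have "x ^ N * horner_sum x g n = x ^ n * horner_sum x g N"
    by (simp only: horner_sum_beyond_support power_add mult_ac)
  then show ?thesis
    unfolding f1_map_def Let_def n_def[symmetric] horner_sum_def[symmetric] by (rule loc_elem_eqI)
qed

lemma xU_mult_vanishing: "\<forall>i\<ge>N. g i = 0 \<Longrightarrow> \<forall>i\<ge>N. xU_mult x g i = 0"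
  by (simp add: xU_mult_def U_act_def)

lemma xU_mult_in_inv_polys: "g \<in> inv_polys \<Longrightarrow> xU_mult x g \<in> inv_polys"
  by (elim inv_polysE) (rule inv_polysI[OF xU_mult_vanishing])

lemma f1_map_in_Loc: "f1_map x g \<in> Loc x"
  by (simp add: f1_map_def Let_def loc_elem_in_Loc)

lemma f1_map_linear:
  assumes "g \<in> inv_polys" "h \<in> inv_polys"
  shows "f1_map x (\<lambda>i. r * g i + s * h i) = loc_add x (loc_smul x r (f1_map x g)) (loc_smul x s (f1_map x h))"
proof -
  obtain N1 where "\<forall>i\<ge>N1. g i = 0" using assms(1) by (rule inv_polysE)
  moreover obtain N2 where "\<forall>i\<ge>N2. h i = 0" using assms(2) by (rule inv_polysE)
  ultimately have g: "\<forall>i\<ge>N1 + N2. g i = 0" and h: "\<forall>i\<ge>N1 + N2. h i = 0" by auto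
  then have gh: "\<forall>i\<ge>N1 + N2. r * g i + s * h i = 0" by simp
  show ?thesis
    unfolding f1_map_eq_horner_sum[OF g] f1_map_eq_horner_sum[OF h] f1_map_eq_horner_sum[OF gh]
      loc_smul_loc_elem loc_add_loc_elem horner_sum_linear
    by (rule loc_elem_eqI) (simp add: power_add algebra_simps)
qed

lemma f1_map_xU_mult:
  assumes "g \<in> inv_polys"
  shows "f1_map x (xU_mult x g) = loc_iota x (f0_map g)"
proof -
  obtain N where N: "\<forall>i\<ge>N. g i = 0" using assms by (rule inv_polysE)
  then show ?thesis
    unfolding f1_map_eq_horner_sum[OF xU_mult_vanishing[OF N]] horner_sum_xU_mult loc_iota_def f0_map_def
    by (intro loc_elem_eqI) (simp add: algebra_simps)
qed

lemma xU_mult_eq_zero_iff: "xU_mult x g = (\<lambda>_. 0) \<longleftrightarrow> (\<exists>r. g = (\<lambda>i. x ^ i * r))"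
proof
  assume "xU_mult x g = (\<lambda>_. 0)"
  then have "g (Suc i) = x * g i" for i
    by (auto simp: xU_mult_def U_act_def fun_eq_iff)
  then have "g i = x ^ i * g 0" for i
    by (induction i) simp_all
  then show "\<exists>r. g = (\<lambda>i. x ^ i * r)" by blast
next
  assume "\<exists>r. g = (\<lambda>i. x ^ i * r)"
  then show "xU_mult x g = (\<lambda>_. 0)"
    by (auto simp: xU_mult_def U_act_def fun_eq_iff mult.assoc)
qed

lemma geometric_in_inv_polys:
  fixes x r :: "'a::comm_semiring_1"
  assumes "x ^ k * r = 0"
  shows "(\<lambda>i. x ^ i * r) \<in> inv_polys"
proof (rule inv_polysI[of k], intro allI impI)
  fix i assume "k \<le> i"
  then obtain d where "i = k + d" using le_Suc_ex by blast
  then have "x ^ i * r = x ^ d * (x ^ k * r)" by (simp add: power_add mult_ac)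
  then show "x ^ i * r = 0" using assms by simp
qed

lemma bij_betw_f0_map_kernels:
  "bij_betw f0_map {g \<in> inv_polys. xU_mult x g = (\<lambda>_. 0)} {r. loc_iota x r = loc_iota x 0}"
proof (rule bij_betw_byWitness[where f' = "\<lambda>r i. x ^ i * r"])
  show "\<forall>g\<in>{g \<in> inv_polys. xU_mult x g = (\<lambda>_. 0)}. (\<lambda>i. x ^ i * f0_map g) = g"
    by (auto simp: xU_mult_eq_zero_iff f0_map_def)
  show "\<forall>r\<in>{r. loc_iota x r = loc_iota x 0}. f0_map (\<lambda>i. x ^ i * r) = r"
    by (simp add: f0_map_def)
  show "f0_map ` {g \<in> inv_polys. xU_mult x g = (\<lambda>_. 0)} \<subseteq> {r. loc_iota x r = loc_iota x 0}"
  proof clarify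
    fix g assume g: "g \<in> inv_polys" "xU_mult x g = (\<lambda>_. 0)"
    then obtain r where r: "g = (\<lambda>i. x ^ i * r)" by (auto simp: xU_mult_eq_zero_iff)
    obtain N where "\<forall>i\<ge>N. g i = 0" using g(1) by (rule inv_polysE)
    then have "x ^ N * r = 0" by (simp add: r)
    then show "loc_iota x (f0_map g) = loc_iota x 0" by (auto simp: r f0_map_def loc_iota_eq_zero_iff)
  qed
  show "(\<lambda>r i. x ^ i * r) ` {r. loc_iota x r = loc_iota x 0} \<subseteq> {g \<in> inv_polys. xU_mult x g = (\<lambda>_. 0)}"
    by (auto simp: loc_iota_eq_zero_iff xU_mult_eq_zero_iff geometric_in_inv_polys)
qed

lemma Loc_eq_f1_map_plus_loc_iota:
  assumes "y \<in> Loc x"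
  shows "\<exists>g\<in>inv_polys. \<exists>r. y = loc_add x (f1_map x g) (loc_iota x r)"
proof -
  obtain a m where y: "y = loc_elem x a m" using assms by (rule LocE)
  show ?thesis
  proof (cases m)
    case 0
    have zero: "\<forall>i\<ge>0. (\<lambda>_. 0::'a) i = 0" by simp
    have "y = loc_add x (f1_map x (\<lambda>_. 0)) (loc_iota x a)"
      unfolding f1_map_eq_horner_sum[OF zero] loc_iota_def loc_add_loc_elem y 0 by simp
    then show ?thesis using inv_polysI[OF zero] by blast
  next
    case (Suc m')
    define g where "g = (\<lambda>i. if i = m' then a else 0)"
    have g: "\<forall>i\<ge>m. g i = 0" by (simp add: g_def Suc)
    have "horner_sum x g m' = 0" by (simp add: horner_sum_def g_def)
    then have "horner_sum x g m = a" by (simp add: Suc horner_sum_Suc g_def)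
    then have "y = loc_add x (f1_map x g) (loc_iota x 0)"
      unfolding f1_map_eq_horner_sum[OF g] loc_iota_def loc_add_loc_elem y by simp
    then show ?thesis using inv_polysI[OF g] by blast
  qed
qed

lemma f1_map_eq_loc_iota_imp_image_xU_mult:
  assumes "g \<in> inv_polys" "f1_map x g = loc_iota x r"
  shows "\<exists>h\<in>inv_polys. g = xU_mult x h"
proof -
  define N where "N = inv_deg g"
  have g: "\<forall>i\<ge>N. g i = 0" unfolding N_def using inv_deg_vanishing[OF assms(1)] .
  have "loc_elem x (horner_sum x g N) N = loc_elem x r 0"
    using assms(2) by (simp add: f1_map_eq_horner_sum[OF g] loc_iota_def)
  then obtain k where k: "x ^ k * (horner_sum x g N - x ^ N * r) = 0"
    by (auto simp: loc_elem_eq_iff locrel_iff)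
  define h where "h = (\<lambda>i. x ^ i * r - horner_sum x g i)"
  have "\<forall>i\<ge>N + k. h i = 0"
  proof (intro allI impI)
    fix i assume "N + k \<le> i"
    then obtain d where d: "i = N + (k + d)" using le_Suc_ex by (metis add.assoc)
    have "h i = - (x ^ d * (x ^ k * (horner_sum x g N - x ^ N * r)))"
      unfolding h_def d horner_sum_beyond_support[OF g] by (simp add: power_add algebra_simps)
    then show "h i = 0" using k by simp
  qed
  then have "h \<in> inv_polys" by (rule inv_polysI)
  moreover have "g = xU_mult x h"
    by (simp add: fun_eq_iff h_def xU_mult_def U_act_def horner_sum_Suc algebra_simps)
  ultimately show ?thesis by blast
qed

theorem lemma6p6:
  fixes x :: "'a::comm_ring_1"
  shows
    "(\<forall>g\<in>inv_polys. xU_mult x g \<in> inv_polys)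
   \<and> (\<forall>g\<in>inv_polys. f1_map x g \<in> Loc x)
   \<and> (\<forall>g\<in>inv_polys. \<forall>h\<in>inv_polys. \<forall>r s.
        f0_map (\<lambda>i. r * g i + s * h i) = r * f0_map g + s * f0_map h
      \<and> f1_map x (\<lambda>i. r * g i + s * h i)
          = loc_add x (loc_smul x r (f1_map x g)) (loc_smul x s (f1_map x h)))
   \<comment> \<open>commutativity of the square: f1 o (x - U) = iota_x o f0\<close>
   \<and> (\<forall>g\<in>inv_polys. f1_map x (xU_mult x g) = loc_iota x (f0_map g))
   \<comment> \<open>H^0: f0 restricts to a bijection ker(x - U) -> ker(iota_x)\<close>
   \<and> bij_betw f0_map {g\<in>inv_polys. xU_mult x g = (\<lambda>_. 0)} {r. loc_iota x r = loc_iota x 0}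
   \<comment> \<open>H^1: the induced map coker(x - U) -> coker(iota_x) is surjective ...\<close>
   \<and> (\<forall>y\<in>Loc x. \<exists>g\<in>inv_polys. \<exists>r. y = loc_add x (f1_map x g) (loc_iota x r))
   \<comment> \<open>... and injective\<close>
   \<and> (\<forall>g\<in>inv_polys. (\<exists>r. f1_map x g = loc_iota x r) \<longrightarrow> (\<exists>h\<in>inv_polys. g = xU_mult x h))"
  by (auto simp: f0_map_def xU_mult_in_inv_polys f1_map_in_Loc f1_map_linear f1_map_xU_mult
      bij_betw_f0_map_kernels Loc_eq_f1_map_plus_loc_iota
      intro: f1_map_eq_loc_iota_imp_image_xU_mult)

end
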